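(* Let $r\in\mathbb Z_+$ be even and $\Gamma=\Gamma_{(r,r)}$. If $E\in(-4,4)\setminus\mathcal C_\Gamma$, then $E\in\operatorname{int}B_j^\Gamma$ for some $j$.
   Context: For $r\ge3$ and $\theta\in\mathbb R$, $\Delta_\theta^r\in\mathbb C^{r\times r}$ is the Hermitian matrix with $1$ on the sub- and superdiagonals, $0$ on the diagonal, entry $e^{-i\theta}$ in position $(1,r)$ and $e^{i\theta}$ in position $(r,1)$, all other entries $0$; $\Delta_\theta^2=\begin{bmatrix}0&1+e^{-i\theta}\\1+e^{i\theta}&0\end{bmatrix}$. $\Gamma=\Gamma_{(r,r)}=([0,r)\times[0,r))\cap\mathbb Z^2$, $\Delta^\Gamma_{\theta,\varphi}=\Delta_\theta^r\otimes I_r+I_r\otimes\Delta_\varphi^r$, with eigenvalues $\lambda_1^\Gamma(\theta,\varphi)\le\cdots\le\lambda_{r^2}^\Gamma(\theta,\varphi)$ counted with multiplicity, and bands $B_j^\Gamma=\{\lambda_j^\Gamma(\theta,\varphi):(\theta,\varphi)\in[0,\pi]^2\}$. $\mathcal C_r=\{2\cos(\pi j/r): j\in\mathbb Z,\ 0\le j\le r\}$ and $\mathcal C_\Gamma=\mathcal C_r+\mathcal C_r=\{a+b:a,b\in\mathcal C_r\}$ (the exceptional energies). *)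

theory Defs
  imports "HOL-Analysis.Analysis" "Jordan_Normal_Form.Char_Poly"
begin

text \<open>The r x r matrix Delta^r_theta (0-based indices). Position (1,r) of the paper is (0,r-1).\<close>
definition Delta :: "nat \<Rightarrow> real \<Rightarrow> complex Matrix.mat" where
  "Delta r \<theta> =
    (if r = 2 then
       Matrix.mat 2 2 (\<lambda>(i,j). if i = 0 \<and> j = 1 then 1 + cis (-\<theta>)
                               else if i = 1 \<and> j = 0 then 1 + cis \<theta> else 0)
     else
       Matrix.mat r r (\<lambda>(i,j). if j = i + 1 \<or> i = j + 1 then 1
                               else if i = 0 \<and> j = r - 1 then cis (-\<theta>)
                               else if i = r - 1 \<and> j = 0 then cis \<theta> else 0))"

text \<open>Kronecker product of r x r matrices, index (a,b) of the tensor product is a*r+b.\<close>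
definition kron :: "nat \<Rightarrow> complex Matrix.mat \<Rightarrow> complex Matrix.mat \<Rightarrow> complex Matrix.mat" where
  "kron r A B = Matrix.mat (r*r) (r*r)
     (\<lambda>(p,q). A $$ (p div r, q div r) * B $$ (p mod r, q mod r))"

definition DeltaGamma :: "nat \<Rightarrow> real \<Rightarrow> real \<Rightarrow> complex Matrix.mat" where
  "DeltaGamma r \<theta> \<phi> = kron r (Delta r \<theta>) (1\<^sub>m r) + kron r (1\<^sub>m r) (Delta r \<phi>)"

text \<open>Eigenvalues (roots of the characteristic polynomial, with multiplicity), in increasing order.
  The matrix is Hermitian, so the eigenvalues are real.\<close>
definition eigs :: "nat \<Rightarrow> real \<Rightarrow> real \<Rightarrow> real list" where
  "eigs r \<theta> \<phi> = sorted_list_of_multiset (image_mset Re (proots (char_poly (DeltaGamma r \<theta> \<phi>))))"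

definition lam :: "nat \<Rightarrow> nat \<Rightarrow> real \<Rightarrow> real \<Rightarrow> real" where
  "lam r j \<theta> \<phi> = eigs r \<theta> \<phi> ! (j - 1)"

definition band :: "nat \<Rightarrow> nat \<Rightarrow> real set" where
  "band r j = {lam r j \<theta> \<phi> | \<theta> \<phi>. \<theta> \<in> {0..pi} \<and> \<phi> \<in> {0..pi}}"

definition Cr :: "nat \<Rightarrow> real set" where
  "Cr r = {2 * cos (pi * real j / real r) | j :: nat. j \<le> r}"

definition CGamma :: "nat \<Rightarrow> real set" where
  "CGamma r = {a + b | a b. a \<in> Cr r \<and> b \<in> Cr r}"

end

(*
  The vectors (w^a)_a with w^r = e^{i\<theta>} diagonalise \<Delta>^r_\<theta> with eigenvalue w + w^{-1}, so the
  spectrum of \<Delta>^\<Gamma>_{\<theta>,\<phi>} consists of the r^2 sums 2 cos((\<theta>+2\<pi>k)/r) + 2 cos((\<phi>+2\<pi>l)/r).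
  Restrict to the diagonal \<theta> = \<phi> = t \<in> [0,\<pi>]. Sorting is 1-Lipschitz in the sup norm, so every
  \<lambda>_j(t,t) is continuous. For even r, the number of eigenvalues below E is even at t = \<pi>, because
  k \<mapsto> r-1-k pairs them up without fixed points, and odd at t = 0, because the fixed points of
  k \<mapsto> -k mod r are 0 and r/2, with eigenvalues 2 and -2, leaving three (E > 0) or one (E < 0)
  fixed pairs. At t = 0 and t = \<pi> all eigenvalues lie in C_\<Gamma>, which misses E, so for the first
  index j at which the two counts differ, \<lambda>_j(t,t) lies strictly on opposite sides of E at the two
  endpoints; by the intermediate value theorem a whole interval around E lies in B_j.
*)

theory Submission
  imports Defs "HOL-Library.Real_Mod" "HOL-Library.Z2" "HOL-Library.Disjoint_Sets"
begin

lemma div_mod_less_square: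
  fixes p r :: nat
  assumes "p < r * r"
  shows "p div r < r" and "p mod r < r"
  using assms by (auto simp: less_mult_imp_div_less intro!: mod_less_divisor Nat.gr0I)

lemma bij_betw_mult_add: "bij_betw (\<lambda>(a, b). a * r + b) ({..<r} \<times> {..<r}) {..<r * r}"
  for r :: nat
proof (rule bij_betw_byWitness[where f' = "\<lambda>p. (p div r, p mod r)"])
  show "(\<lambda>(a, b). a * r + b) ` ({..<r} \<times> {..<r}) \<subseteq> {..<r * r}"
  proof clarsimp
    fix a b assume "a < r" "b < r"
    then have "a * r + b < (a + 1) * r" by simp
    also have "\<dots> \<le> r * r" using \<open>a < r\<close> by (intro mult_le_mono1) simp
    finally show "a * r + b < r * r" .
  qed
qed (auto simp: div_mod_less_square)

lemma sum_lessThan_square_div_mod: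
  fixes F :: "nat \<Rightarrow> nat \<Rightarrow> 'b::comm_monoid_add"
  shows "(\<Sum>p<r * r. F (p div r) (p mod r)) = (\<Sum>a<r. \<Sum>b<r. F a b)"
proof -
  have "(\<Sum>p<r * r. F (p div r) (p mod r))
      = (\<Sum>(a, b)\<in>{..<r} \<times> {..<r}. F ((a * r + b) div r) ((a * r + b) mod r))"
    using sum.reindex_bij_betw[OF bij_betw_mult_add[of r], of "\<lambda>p. F (p div r) (p mod r)"]
    by (simp add: split_def)
  also have "\<dots> = (\<Sum>(a, b)\<in>{..<r} \<times> {..<r}. F a b)"
    by (intro sum.cong) auto
  finally show ?thesis
    by (simp add: sum.cartesian_product)
qed

lemma length_filter_map_upt: "length (filter P (map f [0..<n])) = (\<Sum>i<n. if P (f i) then 1 else 0)"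
  by (induction n) auto

lemma obtain_separating_index:
  fixes m n N :: nat
  assumes "m \<noteq> n" and "m \<le> N" and "n \<le> N"
  obtains j where "j < N" and "j < m \<longleftrightarrow> \<not> j < n"
proof (cases "m < n")
  case True
  with assms show thesis by (intro that[of m]) auto
next
  case False
  with assms show thesis by (intro that[of n]) auto
qed

lemma sorted_nth_less_iff:
  fixes xs :: "'a::linorder list"
  assumes "sorted xs" and "j < length xs"
  shows "xs ! j < c \<longleftrightarrow> j < length (filter (\<lambda>x. x < c) xs)"
  using assms
proof (induction xs arbitrary: j)
  case (Cons x xs)
  show ?case
  proof (cases "x < c")
    case True
    with Cons show ?thesis by (cases j) auto
  next
    case False
    with Cons.prems(1) have "\<not> y < c" if "y \<in> set (x # xs)" for y
      using that by (auto simp: not_less intro: order.trans)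
    with Cons.prems(2) nth_mem[of j "x # xs"] show ?thesis
      by (auto simp: filter_empty_conv)
  qed
qed simp

lemma length_filter_sort: "length (filter P (sort xs)) = length (filter P xs)"
  by (metis mset_filter mset_sort size_mset)

lemma sort_nth_le_add:
  fixes xs ys :: "'a::linordered_ab_group_add list"
  assumes len: "length xs = length ys" and le: "\<And>i. i < length ys \<Longrightarrow> xs ! i \<le> ys ! i + \<delta>"
    and j: "j < length ys"
  shows "sort xs ! j \<le> sort ys ! j + \<delta>"
proof (rule ccontr)
  define c where "c = sort xs ! j"
  assume "\<not> sort xs ! j \<le> sort ys ! j + \<delta>"
  then have "sort ys ! j < c - \<delta>"
    by (simp add: c_def algebra_simps)
  then have "j < length (filter (\<lambda>y. y < c - \<delta>) ys)"
    using sorted_nth_less_iff[of "sort ys" j] j by (simp add: length_filter_sort)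
  also have "\<dots> \<le> length (filter (\<lambda>x. x < c) xs)"
  proof -
    have "xs ! i < c" if "i < length ys" "ys ! i < c - \<delta>" for i
      using le[OF that(1)] that(2) by (simp add: less_diff_eq)
    then have "{i. i < length ys \<and> ys ! i < c - \<delta>} \<subseteq> {i. i < length xs \<and> xs ! i < c}"
      using len by auto
    then show ?thesis
      unfolding length_filter_conv_card by (intro card_mono) auto
  qed
  finally have "sort xs ! j < c"
    using sorted_nth_less_iff[of "sort xs" j] j len by (simp add: length_filter_sort)
  then show False
    by (simp add: c_def)
qed

lemma of_nat_bit_eq_0_iff: "(of_nat n :: bit) = 0 \<longleftrightarrow> even n"
  by (induction n) auto

lemma even_card_fixpoint_free_involution:
  assumes "\<And>x. x \<in> S \<Longrightarrow> \<sigma> x \<in> S" "\<And>x. x \<in> S \<Longrightarrow> \<sigma> (\<sigma> x) = x"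
    and "\<And>x. x \<in> S \<Longrightarrow> \<sigma> x \<noteq> x"
  shows "even (card S)"
proof -
  \<comment> \<open>Each orbit \<open>{x, \<sigma> x}\<close> contributes \<open>1 + 1 = 0\<close> in characteristic 2.\<close>
  have "(\<Sum>x\<in>S. 1 :: bit) = 0"
    by (rule sum_involution_eq_0[where h = \<sigma>]) (use assms in auto)
  then show ?thesis
    by (simp add: of_nat_bit_eq_0_iff)
qed

lemma even_card_involution_iff:
  assumes "finite S" "\<And>x. x \<in> S \<Longrightarrow> \<sigma> x \<in> S" "\<And>x. x \<in> S \<Longrightarrow> \<sigma> (\<sigma> x) = x"
  shows "even (card S) \<longleftrightarrow> even (card {x \<in> S. \<sigma> x = x})"
proof -
  have "card S = card ({x \<in> S. \<sigma> x = x} \<union> {x \<in> S. \<sigma> x \<noteq> x})"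
    by (rule arg_cong[where f = card]) auto
  also have "\<dots> = card {x \<in> S. \<sigma> x = x} + card {x \<in> S. \<sigma> x \<noteq> x}"
    using assms(1) by (intro card_Un_disjoint) auto
  moreover have "even (card {x \<in> S. \<sigma> x \<noteq> x})"
    using assms by (intro even_card_fixpoint_free_involution[where \<sigma> = \<sigma>]) auto
  ultimately show ?thesis
    by simp
qed

lemma neg_mod_eq_self_iff:
  fixes a r :: nat
  assumes "a < r"
  shows "(r - a) mod r = a \<longleftrightarrow> a = 0 \<or> r = 2 * a"
  using assms by (cases "a = 0") auto

lemma neg_mod_involutive:
  fixes a r :: nat
  assumes "a < r"
  shows "(r - (r - a) mod r) mod r = a"
  using assms by (cases "a = 0") auto

section \<open>Kronecker products\<close>

lemma dim_kron [simp]: "dim_row (kron r A B) = r * r" "dim_col (kron r A B) = r * r"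
  by (simp_all add: kron_def)

lemma kron_carrier [simp]: "kron r A B \<in> carrier_mat (r * r) (r * r)"
  by (simp add: kron_def)

lemma kron_index:
  "p < r * r \<Longrightarrow> q < r * r \<Longrightarrow> kron r A B $$ (p, q) = A $$ (p div r, q div r) * B $$ (p mod r, q mod r)"
  by (simp add: kron_def)

lemma kron_mult:
  assumes "A \<in> carrier_mat r r" "B \<in> carrier_mat r r" "C \<in> carrier_mat r r" "D \<in> carrier_mat r r"
  shows "kron r A B * kron r C D = kron r (A * C) (B * D)"
proof (rule eq_matI)
  fix p q assume "p < dim_row (kron r (A * C) (B * D))" "q < dim_col (kron r (A * C) (B * D))"
  then have p: "p < r * r" and q: "q < r * r" by (simp_all add: kron_def)
  have "(kron r A B * kron r C D) $$ (p, q) = (\<Sum>s<r * r. kron r A B $$ (p, s) * kron r C D $$ (s, q))"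
    using p q by (simp add: scalar_prod_def atLeast0LessThan)
  also have "\<dots> = (\<Sum>s<r * r. (\<lambda>a b. (A $$ (p div r, a) * C $$ (a, q div r))
      * (B $$ (p mod r, b) * D $$ (b, q mod r))) (s div r) (s mod r))"
    using p q by (intro sum.cong refl) (simp add: kron_index algebra_simps)
  also have "\<dots> = (\<Sum>a<r. \<Sum>b<r. (A $$ (p div r, a) * C $$ (a, q div r))
      * (B $$ (p mod r, b) * D $$ (b, q mod r)))"
    by (rule sum_lessThan_square_div_mod)
  also have "\<dots> = (\<Sum>a<r. A $$ (p div r, a) * C $$ (a, q div r))
      * (\<Sum>b<r. B $$ (p mod r, b) * D $$ (b, q mod r))"
    by (simp add: sum_product)
  also have "\<dots> = kron r (A * C) (B * D) $$ (p, q)"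
    using p q assms div_mod_less_square[OF p] div_mod_less_square[OF q]
    by (simp add: kron_index scalar_prod_def atLeast0LessThan)
  finally show "(kron r A B * kron r C D) $$ (p, q) = kron r (A * C) (B * D) $$ (p, q)" .
qed (simp_all add: kron_def)

lemma kron_one: "kron r (1\<^sub>m r) (1\<^sub>m r) = 1\<^sub>m (r * r)"
proof (rule eq_matI)
  fix p q assume "p < dim_row (1\<^sub>m (r * r) :: complex Matrix.mat)" "q < dim_col (1\<^sub>m (r * r) :: complex Matrix.mat)"
  then have p: "p < r * r" and q: "q < r * r" by simp_all
  have "p div r = q div r \<and> p mod r = q mod r \<longleftrightarrow> p = q"
    by (metis div_mult_mod_eq)
  then show "kron r (1\<^sub>m r) (1\<^sub>m r) $$ (p, q) = 1\<^sub>m (r * r) $$ (p, q)"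
    using p q div_mod_less_square[OF p] div_mod_less_square[OF q] by (auto simp: kron_index)
qed (simp_all add: kron_def)

section \<open>Diagonalising \<open>\<Delta>\<^sup>r\<^sub>\<theta>\<close> by a discrete Fourier basis\<close>

definition fourier_root :: "nat \<Rightarrow> real \<Rightarrow> nat \<Rightarrow> complex" where
  "fourier_root r \<theta> k = cis ((\<theta> + 2 * pi * real k) / real r)"

definition Delta_eigenvalue :: "nat \<Rightarrow> real \<Rightarrow> nat \<Rightarrow> real" where
  "Delta_eigenvalue r \<theta> k = 2 * cos ((\<theta> + 2 * pi * real k) / real r)"

definition fourier_mat :: "nat \<Rightarrow> real \<Rightarrow> complex Matrix.mat" where
  "fourier_mat r \<theta> = Matrix.mat r r (\<lambda>(a, k). fourier_root r \<theta> k ^ a)"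

definition fourier_inv_mat :: "nat \<Rightarrow> real \<Rightarrow> complex Matrix.mat" where
  "fourier_inv_mat r \<theta> = Matrix.mat r r (\<lambda>(k, a). cnj (fourier_root r \<theta> k ^ a) / of_nat r)"

lemma fourier_mat_carrier [simp]: "fourier_mat r \<theta> \<in> carrier_mat r r"
  by (simp add: fourier_mat_def)

lemma fourier_inv_mat_carrier [simp]: "fourier_inv_mat r \<theta> \<in> carrier_mat r r"
  by (simp add: fourier_inv_mat_def)

lemma Delta_carrier [simp]: "Delta r \<theta> \<in> carrier_mat r r"
  by (simp add: Delta_def)

(* For r = 2 the two corner entries fall onto the off-diagonal, which produces the entries
   1 + cis (\<mp>\<theta>) of Delta 2 \<theta>. *)
lemma Delta_eq_mat:
  assumes "r \<ge> 2"
  shows "Delta r \<theta> = Matrix.mat r r (\<lambda>(a, b).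
     (if b = a + 1 then 1 else 0) + (if a = b + 1 then 1 else 0)
     + (if a = 0 \<and> b = r - 1 then cis (-\<theta>) else 0) + (if a = r - 1 \<and> b = 0 then cis \<theta> else 0))"
proof (cases "r = 2")
  case True
  show ?thesis
    unfolding Delta_def True by (rule eq_matI) (auto simp: less_2_cases_iff)
next
  case False
  with assms show ?thesis
    unfolding Delta_def by (intro eq_matI) auto
qed

lemma fourier_root_nonzero [simp]: "fourier_root r \<theta> k \<noteq> 0"
  by (simp add: fourier_root_def)

lemma fourier_root_power:
  assumes "r > 0"
  shows "fourier_root r \<theta> k ^ r = cis \<theta>"
proof -
  have "fourier_root r \<theta> k ^ r = cis (real r * ((\<theta> + 2 * pi * real k) / real r))"
    unfolding fourier_root_def by (rule Complex.DeMoivre)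
  also have "\<dots> = cis \<theta> * cis (2 * pi * real k)"
    using assms by (simp flip: cis_mult)
  also have "cis (2 * pi * real k) = 1"
    by (rule cis_multiple_2pi) simp
  finally show ?thesis
    by simp
qed

lemma Delta_eigenvalue_eq:
  "complex_of_real (Delta_eigenvalue r \<theta> k) = fourier_root r \<theta> k + inverse (fourier_root r \<theta> k)"
  by (simp add: Delta_eigenvalue_def fourier_root_def complex_eq_iff cis.ctr)

lemma Delta_fourier_eigenvector:
  assumes r: "r \<ge> 2" and a: "a < r" and k: "k < r"
  shows "(Delta r \<theta> * fourier_mat r \<theta>) $$ (a, k)
    = complex_of_real (Delta_eigenvalue r \<theta> k) * fourier_mat r \<theta> $$ (a, k)"
proof -
  define x where "x = fourier_root r \<theta> k"
  have x: "x \<noteq> 0" "x ^ r = cis \<theta>"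
    using r by (simp_all add: x_def fourier_root_power)
  \<comment> \<open>Since \<open>x ^ r = cis \<theta>\<close>, the corner entries continue both shifts periodically.\<close>
  have up: "(if a + 1 < r then x ^ (a + 1) else 0) + (if a = r - 1 then cis \<theta> else 0) = x * x ^ a"
  proof (cases "a + 1 < r")
    case False
    with a have "Suc a = r" by simp
    then have "x * x ^ a = cis \<theta>"
      using x(2) by (metis power_Suc)
    with False \<open>Suc a = r\<close> show ?thesis by simp
  qed simp
  have down: "(if 0 < a then x ^ (a - 1) else 0) + (if a = 0 then cis (-\<theta>) * x ^ (r - 1) else 0)
      = inverse x * x ^ a"
  proof (cases a)
    case 0
    have "x * x ^ (r - 1) = cis \<theta>"
      using x r by (metis Suc_diff_1 power_Suc zero_less_numeral order_less_le_trans)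
    then have "cis (-\<theta>) * x ^ (r - 1) = inverse x"
      using x by (simp add: field_simps cis_divide[symmetric] flip: cis_inverse)
    with 0 show ?thesis by simp
  next
    case (Suc b)
    with x show ?thesis by simp
  qed
  have "(Delta r \<theta> * fourier_mat r \<theta>) $$ (a, k) = (\<Sum>b\<in>{0..<r}.
      ((if b = a + 1 then 1 else 0) + (if a = b + 1 then 1 else 0)
      + (if a = 0 \<and> b = r - 1 then cis (-\<theta>) else 0) + (if a = r - 1 \<and> b = 0 then cis \<theta> else 0))
      * x ^ b)"
    using a k by (simp add: Delta_eq_mat[OF r] fourier_mat_def scalar_prod_def x_def)
  also have "\<dots> = (\<Sum>b\<in>{0..<r}. if b = a + 1 then x ^ b else 0)
      + (\<Sum>b\<in>{0..<r}. if b = a - 1 then (if 0 < a then x ^ b else 0) else 0)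
      + (\<Sum>b\<in>{0..<r}. if b = r - 1 then (if a = 0 then cis (-\<theta>) * x ^ b else 0) else 0)
      + (\<Sum>b\<in>{0..<r}. if b = 0 then (if a = r - 1 then cis \<theta> * x ^ b else 0) else 0)"
    unfolding sum.distrib[symmetric] by (intro sum.cong refl) (auto simp: distrib_right)
  also have "\<dots> = ((if a + 1 < r then x ^ (a + 1) else 0) + (if a = r - 1 then cis \<theta> else 0))
      + ((if 0 < a then x ^ (a - 1) else 0) + (if a = 0 then cis (-\<theta>) * x ^ (r - 1) else 0))"
    using a r by (simp only: sum.delta finite_atLeastLessThan) (auto simp: ac_simps)
  also have "\<dots> = (x + inverse x) * x ^ a"
    unfolding up down by (simp add: distrib_right)
  finally show ?thesis
    using a k by (simp add: Delta_eigenvalue_eq fourier_mat_def x_def)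
qed

lemma sum_fourier_root_powers:
  assumes r: "r > 0" and k: "k < r" and l: "l < r"
  shows "(\<Sum>a<r. (cnj (fourier_root r \<theta> k) * fourier_root r \<theta> l) ^ a) = (if k = l then of_nat r else 0)"
proof (cases "k = l")
  case False
  define z where "z = cnj (fourier_root r \<theta> k) * fourier_root r \<theta> l"
  have z: "z = cis (2 * pi * (real l - real k) / real r)"
    unfolding z_def fourier_root_def cis_cnj cis_mult by (simp add: diff_divide_distrib[symmetric] algebra_simps)
  have "z ^ r = cnj (fourier_root r \<theta> k ^ r) * fourier_root r \<theta> l ^ r"
    by (simp add: z_def power_mult_distrib)
  then have zr: "z ^ r = 1"
    using r by (simp add: fourier_root_power cis_cnj cis_mult)
  have "z \<noteq> 1"
  proof
    assume "z = 1"
    then obtain n :: int where "2 * pi * (real l - real k) / real r = of_int n * (2 * pi)"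
      using z by (auto simp: cis_eq_1_iff)
    then have "2 * pi * (real l - real k) = 2 * pi * (of_int n * real r)"
      using r by (simp add: field_simps)
    then have "real_of_int (int l - int k) = of_int (n * int r)"
      by simp
    then have "int r dvd int l - int k"
      by (metis of_int_eq_iff dvd_triv_right)
    then have "\<bar>int r\<bar> \<le> \<bar>int l - int k\<bar>"
      using False by (intro dvd_imp_le_int) auto
    with k l show False by arith
  qed
  then have "(\<Sum>a<r. z ^ a) = (z ^ r - 1) / (z - 1)"
    by (rule geometric_sum)
  with zr False show ?thesis
    by (simp add: z_def)
qed (simp add: fourier_root_def cis_cnj cis_mult)

lemma fourier_inv_mat_mult:
  assumes "r > 0"
  shows "fourier_inv_mat r \<theta> * fourier_mat r \<theta> = 1\<^sub>m r"
proof (rule eq_matI)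
  fix k l assume "k < dim_row (1\<^sub>m r :: complex Matrix.mat)" "l < dim_col (1\<^sub>m r :: complex Matrix.mat)"
  then have k: "k < r" and l: "l < r" by simp_all
  have "(fourier_inv_mat r \<theta> * fourier_mat r \<theta>) $$ (k, l)
      = (\<Sum>a<r. (cnj (fourier_root r \<theta> k) * fourier_root r \<theta> l) ^ a) / of_nat r"
    using k l by (simp add: fourier_inv_mat_def fourier_mat_def scalar_prod_def atLeast0LessThan
        sum_divide_distrib power_mult_distrib)
  then show "(fourier_inv_mat r \<theta> * fourier_mat r \<theta>) $$ (k, l) = 1\<^sub>m r $$ (k, l)"
    using sum_fourier_root_powers[OF assms k l] k l assms by simp
qed (simp_all add: fourier_inv_mat_def fourier_mat_def)

section \<open>The spectrum of \<open>\<Delta>\<^sup>\<Gamma>\<close>\<close>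

definition DeltaGamma_eigenvalue :: "nat \<Rightarrow> real \<Rightarrow> real \<Rightarrow> nat \<Rightarrow> real" where
  "DeltaGamma_eigenvalue r \<theta> \<phi> p = Delta_eigenvalue r \<theta> (p div r) + Delta_eigenvalue r \<phi> (p mod r)"

definition DeltaGamma_eigenvalues :: "nat \<Rightarrow> real \<Rightarrow> real \<Rightarrow> real list" where
  "DeltaGamma_eigenvalues r \<theta> \<phi> = map (DeltaGamma_eigenvalue r \<theta> \<phi>) [0..<r * r]"

abbreviation DeltaGamma_diag :: "nat \<Rightarrow> real \<Rightarrow> real \<Rightarrow> complex Matrix.mat" where
  "DeltaGamma_diag r \<theta> \<phi> \<equiv> mat_diag (r * r) (\<lambda>p. complex_of_real (DeltaGamma_eigenvalue r \<theta> \<phi> p))"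

lemma length_DeltaGamma_eigenvalues [simp]: "length (DeltaGamma_eigenvalues r \<theta> \<phi>) = r * r"
  by (simp add: DeltaGamma_eigenvalues_def)

lemma DeltaGamma_carrier [simp]: "DeltaGamma r \<theta> \<phi> \<in> carrier_mat (r * r) (r * r)"
  by (simp add: DeltaGamma_def)

lemma DeltaGamma_mult_fourier:
  assumes r: "r \<ge> 2"
  shows "DeltaGamma r \<theta> \<phi> * kron r (fourier_mat r \<theta>) (fourier_mat r \<phi>)
    = kron r (fourier_mat r \<theta>) (fourier_mat r \<phi>) * DeltaGamma_diag r \<theta> \<phi>"
proof -
  let ?F = "kron r (fourier_mat r \<theta>) (fourier_mat r \<phi>)"
  have "DeltaGamma r \<theta> \<phi> * ?F
      = kron r (Delta r \<theta>) (1\<^sub>m r) * ?F + kron r (1\<^sub>m r) (Delta r \<phi>) * ?F"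
    unfolding DeltaGamma_def by (rule add_mult_distrib_mat[of _ "r * r" "r * r" _ _ "r * r"]) auto
  also have "\<dots> = kron r (Delta r \<theta> * fourier_mat r \<theta>) (fourier_mat r \<phi>)
      + kron r (fourier_mat r \<theta>) (Delta r \<phi> * fourier_mat r \<phi>)"
    by (simp add: kron_mult left_mult_one_mat[OF fourier_mat_carrier])
  also have "\<dots> = ?F * DeltaGamma_diag r \<theta> \<phi>"
    using r by (intro eq_matI)
      (auto simp: mat_diag_mult_right[OF kron_carrier] kron_index div_mod_less_square
        Delta_fourier_eigenvector DeltaGamma_eigenvalue_def algebra_simps)
  finally show ?thesis .
qed

lemma DeltaGamma_similar_diag:
  assumes r: "r \<ge> 2"
  shows "similar_mat (DeltaGamma r \<theta> \<phi>) (DeltaGamma_diag r \<theta> \<phi>)"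
proof -
  let ?F = "kron r (fourier_mat r \<theta>) (fourier_mat r \<phi>)"
    and ?G = "kron r (fourier_inv_mat r \<theta>) (fourier_inv_mat r \<phi>)"
  have GF: "?G * ?F = 1\<^sub>m (r * r)"
    using r by (simp add: kron_mult fourier_inv_mat_mult kron_one)
  then have FG: "?F * ?G = 1\<^sub>m (r * r)"
    by (rule mat_mult_left_right_inverse[rotated 2]) auto
  have "DeltaGamma r \<theta> \<phi> = DeltaGamma r \<theta> \<phi> * (?F * ?G)"
    by (simp add: FG right_mult_one_mat[OF DeltaGamma_carrier])
  also have "\<dots> = (DeltaGamma r \<theta> \<phi> * ?F) * ?G"
    by (rule assoc_mult_mat[symmetric, of _ "r * r" "r * r" _ "r * r" _ "r * r"]) auto
  also have "\<dots> = ?F * DeltaGamma_diag r \<theta> \<phi> * ?G"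
    by (simp add: DeltaGamma_mult_fourier r)
  finally show ?thesis
    by (intro similar_matI[of _ _ ?F ?G "r * r"]) (auto simp: FG GF)
qed

lemma proots_prod_list_linear: "proots (\<Prod>a\<leftarrow>xs. [:- a, 1:]) = mset (xs :: 'a :: idom list)"
proof (induction xs)
  case (Cons a xs)
  have "proots ([:- a, 1:] * (\<Prod>a\<leftarrow>xs. [:- a, 1:])) = {#a#} + mset xs"
    by (subst proots_mult) (auto simp: Cons)
  then show ?case by simp
qed simp

lemma eigs_eq_sort:
  assumes "r \<ge> 2"
  shows "eigs r \<theta> \<phi> = sort (DeltaGamma_eigenvalues r \<theta> \<phi>)"
proof -
  have "upper_triangular (DeltaGamma_diag r \<theta> \<phi>)"
    by (simp add: upper_triangular_def mat_diag_def)
  then have "char_poly (DeltaGamma r \<theta> \<phi>) = (\<Prod>a\<leftarrow>diag_mat (DeltaGamma_diag r \<theta> \<phi>). [:- a, 1:])"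
    by (simp add: char_poly_similar[OF DeltaGamma_similar_diag[OF assms]]
        char_poly_upper_triangular[OF mat_diag_dim])
  then have "proots (char_poly (DeltaGamma r \<theta> \<phi>)) = mset (diag_mat (DeltaGamma_diag r \<theta> \<phi>))"
    by (simp only: proots_prod_list_linear)
  also have "diag_mat (DeltaGamma_diag r \<theta> \<phi>)
      = map (complex_of_real \<circ> DeltaGamma_eigenvalue r \<theta> \<phi>) [0..<r * r]"
    by (intro nth_equalityI) (simp_all add: diag_mat_def mat_diag_def)
  finally have "image_mset Re (proots (char_poly (DeltaGamma r \<theta> \<phi>)))
      = mset (DeltaGamma_eigenvalues r \<theta> \<phi>)"
    by (simp add: DeltaGamma_eigenvalues_def multiset.map_comp comp_def)
  then show ?thesis
    by (simp add: eigs_def)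
qed

lemma length_filter_DeltaGamma_eigenvalues:
  "length (filter P (DeltaGamma_eigenvalues r \<theta> \<phi>))
    = card {(a, b) \<in> {..<r} \<times> {..<r}. P (Delta_eigenvalue r \<theta> a + Delta_eigenvalue r \<phi> b)}"
proof -
  have "length (filter P (DeltaGamma_eigenvalues r \<theta> \<phi>))
      = (\<Sum>a<r. \<Sum>b<r. if P (Delta_eigenvalue r \<theta> a + Delta_eigenvalue r \<phi> b) then 1 else 0)"
    unfolding DeltaGamma_eigenvalues_def length_filter_map_upt DeltaGamma_eigenvalue_def
    by (rule sum_lessThan_square_div_mod)
  also have "\<dots> = card {(a, b) \<in> {..<r} \<times> {..<r}. P (Delta_eigenvalue r \<theta> a + Delta_eigenvalue r \<phi> b)}"
    by (simp only: sum.cartesian_product)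
      (auto simp: sum.inter_filter[symmetric] split_def intro!: arg_cong[where f = card])
  finally show ?thesis .
qed

section \<open>The diagonal \<open>\<theta> = \<phi>\<close>\<close>

lemma abs_cos_diff_le: "\<bar>cos x - cos y\<bar> \<le> \<bar>x - y\<bar>" for x y :: real
proof -
  have "\<bar>cos x - cos y\<bar> = 2 * \<bar>sin ((x + y) / 2)\<bar> * \<bar>sin ((y - x) / 2)\<bar>"
    by (simp add: cos_diff_cos abs_mult)
  also have "\<dots> \<le> 2 * 1 * \<bar>(y - x) / 2\<bar>"
    by (intro mult_mono abs_sin_x_le_abs_x) auto
  finally show ?thesis by simp
qed

lemma abs_Delta_eigenvalue_diff_le:
  assumes "r > 0"
  shows "\<bar>Delta_eigenvalue r s k - Delta_eigenvalue r t k\<bar> \<le> 2 * \<bar>s - t\<bar>"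
proof -
  define x y where "x = (s + 2 * pi * real k) / real r" and "y = (t + 2 * pi * real k) / real r"
  have "Delta_eigenvalue r s k - Delta_eigenvalue r t k = 2 * (cos x - cos y)"
    by (simp add: Delta_eigenvalue_def x_def y_def)
  then have "\<bar>Delta_eigenvalue r s k - Delta_eigenvalue r t k\<bar> = 2 * \<bar>cos x - cos y\<bar>"
    by (simp only: abs_mult abs_numeral)
  also have "\<dots> \<le> 2 * \<bar>x - y\<bar>"
    using abs_cos_diff_le[of x y] by simp
  also have "\<bar>x - y\<bar> = \<bar>s - t\<bar> / real r"
    by (simp add: x_def y_def diff_divide_distrib[symmetric])
  also have "\<dots> \<le> \<bar>s - t\<bar>"
    using assms by (simp add: divide_le_eq mult_le_cancel_left1)
  finally show ?thesis by simp
qed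

lemma lam_diagonal:
  assumes "r \<ge> 2"
  shows "lam r (Suc j) t t = sort (DeltaGamma_eigenvalues r t t) ! j"
  by (simp add: lam_def eigs_eq_sort[OF assms])

lemma lipschitz_lam_diagonal:
  assumes r: "r \<ge> 2" and j: "j < r * r"
  shows "4-lipschitz_on UNIV (\<lambda>t. lam r (Suc j) t t)"
proof (rule lipschitz_onI)
  fix s t :: real
  have close: "DeltaGamma_eigenvalue r s s p \<le> DeltaGamma_eigenvalue r t t p + 4 * dist s t" for s t p
    using abs_Delta_eigenvalue_diff_le[where r = r and s = s and t = t and k = "p div r"]
      abs_Delta_eigenvalue_diff_le[where r = r and s = s and t = t and k = "p mod r"] r
    by (simp add: DeltaGamma_eigenvalue_def dist_real_def abs_le_iff)
  have "sort (DeltaGamma_eigenvalues r s s) ! j \<le> sort (DeltaGamma_eigenvalues r t t) ! j + 4 * dist s t"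
    using j close[where s = s and t = t] by (intro sort_nth_le_add) (simp_all add: DeltaGamma_eigenvalues_def)
  moreover have "sort (DeltaGamma_eigenvalues r t t) ! j \<le> sort (DeltaGamma_eigenvalues r s s) ! j + 4 * dist s t"
    using j close[where s = t and t = s] by (intro sort_nth_le_add) (simp_all add: DeltaGamma_eigenvalues_def dist_commute)
  ultimately show "dist (lam r (Suc j) s s) (lam r (Suc j) t t) \<le> 4 * dist s t"
    by (simp add: lam_diagonal[OF r] dist_real_def abs_le_iff)
qed simp

lemma Delta_eigenvalue_pi_reflect:
  assumes "a < r"
  shows "Delta_eigenvalue r pi (r - Suc a) = Delta_eigenvalue r pi a"
proof -
  have "(pi + 2 * pi * real (r - Suc a)) / real r = 2 * pi - (pi + 2 * pi * real a) / real r"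
    using assms by (simp add: field_simps)
  then show ?thesis
    by (simp add: Delta_eigenvalue_def)
qed

lemma Delta_eigenvalue_0_neg:
  assumes "a < r"
  shows "Delta_eigenvalue r 0 ((r - a) mod r) = Delta_eigenvalue r 0 a"
proof (cases "a = 0")
  case False
  with assms have "(r - a) mod r = r - a" by simp
  moreover have "2 * pi * real (r - a) / real r = 2 * pi - 2 * pi * real a / real r"
    using assms by (simp add: field_simps)
  ultimately show ?thesis
    by (simp add: Delta_eigenvalue_def)
qed simp

lemma even_count_below_pi:
  assumes "even r"
  shows "even (card {(a, b) \<in> {..<r} \<times> {..<r}. Delta_eigenvalue r pi a + Delta_eigenvalue r pi b < E})"
proof (rule even_card_fixpoint_free_involution[where \<sigma> = "\<lambda>(a, b). (r - Suc a, b)"])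
  fix x assume "x \<in> {(a, b) \<in> {..<r} \<times> {..<r}. Delta_eigenvalue r pi a + Delta_eigenvalue r pi b < E}"
  then obtain a b where x: "x = (a, b)" "a < r" "b < r"
    by auto
  have "r - Suc a \<noteq> a"
    using assms x(2) by presburger
  then show "(\<lambda>(a, b). (r - Suc a, b)) x \<noteq> x"
    using x by simp
qed (auto simp: Delta_eigenvalue_pi_reflect)

lemma odd_count_below_0:
  assumes r: "r > 0" "even r" and E: "-4 < E" "E < 4" "E \<noteq> 0"
  shows "odd (card {(a, b) \<in> {..<r} \<times> {..<r}. Delta_eigenvalue r 0 a + Delta_eigenvalue r 0 b < E})"
    (is "odd (card ?S)")
proof -
  let ?\<sigma> = "\<lambda>(a, b). ((r - a) mod r, (r - b) mod r)"
  obtain h where h: "r = 2 * h" "0 < h"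
    using r by (auto elim: evenE)
  have "Delta_eigenvalue r 0 0 = 2" "Delta_eigenvalue r 0 h = -2"
    using h by (simp_all add: Delta_eigenvalue_def)
  then have "{x \<in> ?S. ?\<sigma> x = x} = (if 0 < E then {(h, h), (0, h), (h, 0)} else {(h, h)})"
    using h E by (auto simp: neg_mod_eq_self_iff)
  then have "odd (card {x \<in> ?S. ?\<sigma> x = x})"
    using h by simp
  moreover have "finite ?S"
    by (rule finite_subset[of _ "{..<r} \<times> {..<r}"]) auto
  then have "even (card ?S) \<longleftrightarrow> even (card {x \<in> ?S. ?\<sigma> x = x})"
    by (rule even_card_involution_iff) (auto simp: Delta_eigenvalue_0_neg neg_mod_involutive r)
  ultimately show ?thesis
    by simp
qed

lemma two_cos_mem_Cr:
  assumes "r > 0" and "m \<le> 2 * r"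
  shows "2 * cos (pi * real m / real r) \<in> Cr r"
proof (cases "m \<le> r")
  case False
  have "pi * real (2 * r - m) / real r = 2 * pi - pi * real m / real r"
    using assms by (simp add: field_simps)
  then have "2 * cos (pi * real m / real r) = 2 * cos (pi * real (2 * r - m) / real r)"
    by simp
  moreover have "2 * r - m \<le> r"
    using False by simp
  ultimately show ?thesis
    unfolding Cr_def by blast
qed (auto simp: Cr_def)

lemma Delta_eigenvalue_mem_Cr:
  assumes "r > 0" and "a < r" and "\<theta> \<in> {0, pi}"
  shows "Delta_eigenvalue r \<theta> a \<in> Cr r"
proof -
  have "Delta_eigenvalue r \<theta> a = 2 * cos (pi * real (if \<theta> = 0 then 2 * a else 2 * a + 1) / real r)"
    using assms(3) by (auto simp: Delta_eigenvalue_def field_simps)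
  then show ?thesis
    using assms by (simp add: two_cos_mem_Cr)
qed

lemma zero_mem_CGamma:
  assumes "r > 0"
  shows "0 \<in> CGamma r"
proof -
  have "2 * cos (pi * real 0 / real r) \<in> Cr r" and "2 * cos (pi * real r / real r) \<in> Cr r"
    unfolding Cr_def by blast+
  then have "2 \<in> Cr r" and "-2 \<in> Cr r"
    using assms by simp_all
  then show ?thesis
    unfolding CGamma_def by force
qed

lemma lam_diagonal_less_iff:
  assumes "r \<ge> 2" and "j < r * r"
  shows "lam r (Suc j) t t < E \<longleftrightarrow> j < length (filter (\<lambda>x. x < E) (DeltaGamma_eigenvalues r t t))"
  using sorted_nth_less_iff[of "sort (DeltaGamma_eigenvalues r t t)" j E] assms
  by (simp add: lam_diagonal length_filter_sort DeltaGamma_eigenvalues_def)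

lemma lam_diagonal_mem_CGamma:
  assumes "r \<ge> 2" and "j < r * r" and "t \<in> {0, pi}"
  shows "lam r (Suc j) t t \<in> CGamma r"
proof -
  have "lam r (Suc j) t t \<in> set (sort (DeltaGamma_eigenvalues r t t))"
    unfolding lam_diagonal[OF assms(1)] using assms(2)
    by (intro nth_mem) (simp add: DeltaGamma_eigenvalues_def)
  then obtain p where p: "p < r * r" "lam r (Suc j) t t = DeltaGamma_eigenvalue r t t p"
    by (auto simp: DeltaGamma_eigenvalues_def)
  have "Delta_eigenvalue r t (p div r) \<in> Cr r" and "Delta_eigenvalue r t (p mod r) \<in> Cr r"
    using assms(1,3) div_mod_less_square[OF p(1)] by (simp_all add: Delta_eigenvalue_mem_Cr)
  then show ?thesis
    unfolding CGamma_def p(2) DeltaGamma_eigenvalue_def by blast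
qed

lemma mem_interior_band:
  assumes r: "r \<ge> 2" and j: "j < r * r"
    and E: "E \<in> open_segment (lam r (Suc j) 0 0) (lam r (Suc j) pi pi)"
  shows "E \<in> interior (band r (Suc j))"
proof -
  have cont: "continuous_on {0..pi} (\<lambda>t. lam r (Suc j) t t)"
    by (rule lipschitz_on_continuous_on[OF lipschitz_on_subset[OF lipschitz_lam_diagonal[OF r j]]]) simp
  have "closed_segment (lam r (Suc j) 0 0) (lam r (Suc j) pi pi) \<subseteq> band r (Suc j)"
  proof
    fix y assume y: "y \<in> closed_segment (lam r (Suc j) 0 0) (lam r (Suc j) pi pi)"
    have "\<exists>t \<in> closed_segment 0 pi. lam r (Suc j) t t = y"
      by (rule IVT'_closed_segment_real[where f = "\<lambda>t. lam r (Suc j) t t"])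
        (use y cont in \<open>simp_all add: closed_segment_eq_real_ivl\<close>)
    then obtain t where "t \<in> {0..pi}" "lam r (Suc j) t t = y"
      by (auto simp: closed_segment_eq_real_ivl)
    then show "y \<in> band r (Suc j)"
      unfolding band_def by blast
  qed
  then have "interior (closed_segment (lam r (Suc j) 0 0) (lam r (Suc j) pi pi)) \<subseteq> interior (band r (Suc j))"
    by (rule interior_mono)
  with E show ?thesis
    by (auto simp: interior_closed_segment)
qed

theorem proposition3p2:
  fixes r :: nat and E :: real
  assumes "r > 0" and "even r"
    and "E \<in> {-4<..<4}" and "E \<notin> CGamma r"
  shows "\<exists>j \<in> {1..r^2}. E \<in> interior (band r j)"
proof -
  have r: "r \<ge> 2"
    using assms(1,2) by presburger
  define N where "N t = length (filter (\<lambda>x. x < E) (DeltaGamma_eigenvalues r t t))" for t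
  have "odd (N 0)" and "even (N pi)"
    using odd_count_below_0[of r E] even_count_below_pi[of r E] zero_mem_CGamma[of r] assms
    by (auto simp: N_def length_filter_DeltaGamma_eigenvalues)
  then have "N 0 \<noteq> N pi"
    by auto
  moreover have "N t \<le> r * r" for t
    unfolding N_def by (metis length_filter_le length_DeltaGamma_eigenvalues)
  ultimately obtain j where j: "j < r * r" and crossing: "j < N 0 \<longleftrightarrow> \<not> j < N pi"
    using obtain_separating_index by blast
  have "lam r (Suc j) 0 0 \<noteq> E" and "lam r (Suc j) pi pi \<noteq> E"
    using lam_diagonal_mem_CGamma[OF r j] assms(4) by auto
  with crossing have "E \<in> open_segment (lam r (Suc j) 0 0) (lam r (Suc j) pi pi)"
    using lam_diagonal_less_iff[OF r j, where E = E and t = 0]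
      lam_diagonal_less_iff[OF r j, where E = E and t = pi]
    unfolding N_def by (auto simp: open_segment_eq_real_ivl)
  then have "E \<in> interior (band r (Suc j))"
    by (rule mem_interior_band[OF r j])
  then show ?thesis
    using j by (auto simp: power2_eq_square)
qed

end
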